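(* Let $\{p_\theta:\theta\in\Omega\subseteq\mathbb{R}\}$ be DQM in a neighborhood of $0$ with score $T\in L^2(p_0)$ at $\theta=0$. Let $\mathcal F$ be a set of real-valued functions and suppose there is $B>0$ such that for every $f\in\mathcal F$: $\mathbb{E}_\theta f^2<B$ for all $\theta$ in a neighborhood of $0$, and $\mathbb{E}_0|f^2T|<B$, $\mathbb{E}_0|fT^2|<B$, $\mathbb{E}_0 f^2T^2<B$. Then as $\theta\to0$, $$\sup_{f\in\mathcal F}\big|\mathbb{E}_\theta f-(\mathbb{E}_0 f+\theta\,\mathbb{E}_0 fT)\big|=o(|\theta|).$$
   Context: DQM at $0$ with score $T$: $\sqrt{p_\theta(x)}=\sqrt{p_0(x)}(1+\theta T(x)/2)+r_\theta(x)$ with $\int r_\theta^2\,d\nu=o(\theta^2)$, densities taken with respect to a dominating measure $\nu$. $\mathbb{E}_\theta$ denotes expectation under $p_\theta$. *)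

theory Defs
  imports "HOL-Analysis.Analysis" "HOL-Library.Landau_Symbols"
begin

definition density_family :: "'a measure \<Rightarrow> real set \<Rightarrow> (real \<Rightarrow> 'a \<Rightarrow> real) \<Rightarrow> bool" where
  "density_family M \<Omega> p \<longleftrightarrow>
     (\<forall>\<theta>\<in>\<Omega>. p \<theta> \<in> borel_measurable M \<and> (\<forall>x\<in>space M. 0 \<le> p \<theta> x)
        \<and> integrable M (p \<theta>) \<and> (\<integral>x. p \<theta> x \<partial>M) = 1)"

definition expect :: "'a measure \<Rightarrow> (real \<Rightarrow> 'a \<Rightarrow> real) \<Rightarrow> real \<Rightarrow> ('a \<Rightarrow> real) \<Rightarrow> real" where
  "expect M p \<theta> f = (\<integral>x. f x * p \<theta> x \<partial>M)"

definition dqm_rem :: "(real \<Rightarrow> 'a \<Rightarrow> real) \<Rightarrow> ('a \<Rightarrow> real) \<Rightarrow> real \<Rightarrow> 'a \<Rightarrow> real" where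
  "dqm_rem p T \<theta> x = sqrt (p \<theta> x) - sqrt (p 0 x) * (1 + \<theta> * T x / 2)"

definition dqm_at0 :: "'a measure \<Rightarrow> real set \<Rightarrow> (real \<Rightarrow> 'a \<Rightarrow> real) \<Rightarrow> ('a \<Rightarrow> real) \<Rightarrow> bool" where
  "dqm_at0 M \<Omega> p T \<longleftrightarrow> 0 \<in> \<Omega> \<and>
     (\<forall>\<theta>\<in>\<Omega>. integrable M (\<lambda>x. (dqm_rem p T \<theta> x)\<^sup>2)) \<and>
     (\<lambda>\<theta>. \<integral>x. (dqm_rem p T \<theta> x)\<^sup>2 \<partial>M) \<in> o[at 0](\<lambda>\<theta>. \<theta>\<^sup>2)"

end

theory Submission
  imports Defs
begin

text \<open>
  Write \<open>s\<^sub>\<theta> = \<surd>p\<^sub>\<theta>\<close> and \<open>r\<^sub>\<theta> = s\<^sub>\<theta> - s\<^sub>0 (1 + \<theta>T/2)\<close>. Squaring gives the exact identity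
  \<open>p\<^sub>\<theta> - p\<^sub>0 - \<theta>T p\<^sub>0 = 2 s\<^sub>0 r\<^sub>\<theta> + (\<theta>T s\<^sub>0/2 + r\<^sub>\<theta>)\<^sup>2\<close>, so the error
  \<open>E\<^sub>\<theta>f - E\<^sub>0f - \<theta>E\<^sub>0(fT)\<close> is the integral of \<open>f\<close> times this expression. Pointwise it is
  bounded by \<open>2|f||r\<^sub>\<theta>|W + \<theta>\<^sup>2|fT\<^sup>2|p\<^sub>0/2\<close> with \<open>W = s\<^sub>\<theta> + 2s\<^sub>0 + |\<theta>T s\<^sub>0/2|\<close>, and the
  product term is split by the weighted AM-GM inequality \<open>2|f|W|r| \<le> L f\<^sup>2W\<^sup>2 + r\<^sup>2/L\<close>.
  Integrating, the first part is \<open>L\<close> times moments bounded by \<open>B\<close> and the second is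
  \<open>\<parallel>r\<^sub>\<theta>\<parallel>\<^sup>2/L = o(\<theta>\<^sup>2)/L\<close>; the weight \<open>L \<sim> \<epsilon>|\<theta>|\<close> makes both \<open>O(\<epsilon>|\<theta>|)\<close>,
  uniformly in \<open>f\<close>, while the last term is \<open>O(\<theta>\<^sup>2)\<close>.
\<close>

lemma two_mult_le_scaled_squares:
  fixes x y L :: real
  assumes "L > 0"
  shows "2 * x * y \<le> L * x\<^sup>2 + y\<^sup>2 / L"
proof -
  have "0 \<le> (L * x - y)\<^sup>2 / L" using assms by simp
  also have "\<dots> = L * x\<^sup>2 + y\<^sup>2 / L - 2 * x * y"
    using assms by (simp add: power2_eq_square field_simps)
  finally show ?thesis
    by simp
qed

lemma square_sum3_le:
  fixes a b c :: real
  shows "(a + b + c)\<^sup>2 \<le> 3 * (a\<^sup>2 + b\<^sup>2 + c\<^sup>2)"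
  using sum_squares_ge_zero[of "a - b" "a - c"] zero_le_square[of "b - c"]
  by (simp add: power2_eq_square algebra_simps)

lemma sqrt_density_expansion:
  fixes p1 p0 th t :: real
  assumes "0 \<le> p1" "0 \<le> p0"
  defines "r \<equiv> sqrt p1 - sqrt p0 * (1 + th * t / 2)"
  shows "p1 - p0 - th * t * p0 = 2 * sqrt p0 * r + (sqrt p0 * th * t / 2 + r)\<^sup>2"
proof -
  have "p1 = (sqrt p0 * (1 + th * t / 2) + r)\<^sup>2" "p0 = (sqrt p0)\<^sup>2"
    using assms by (simp_all add: r_def)
  then show ?thesis by (simp add: power2_eq_square algebra_simps)
qed

lemma abs_expansion_remainder_le:
  fixes s1 s0 a :: real
  assumes s1: "0 \<le> s1" and s0: "0 \<le> s0"
  defines "r \<equiv> s1 - s0 - a"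
  shows "\<bar>2 * s0 * r + (a + r)\<^sup>2\<bar> \<le> 2 * \<bar>r\<bar> * (s1 + 2 * s0 + \<bar>a\<bar>) + 2 * a\<^sup>2"
proof -
  have r_le: "\<bar>r\<bar> \<le> s1 + s0 + \<bar>a\<bar>"
    using s1 s0 abs_ge_self[of a] abs_ge_minus_self[of a] by (simp add: r_def abs_le_iff)
  have "(a + r)\<^sup>2 \<le> 2 * a\<^sup>2 + 2 * r\<^sup>2"
    using zero_le_square[of "a - r"] by (simp add: power2_eq_square algebra_simps)
  also have "r\<^sup>2 \<le> \<bar>r\<bar> * (s1 + s0 + \<bar>a\<bar>)"
    using r_le by (metis abs_ge_zero abs_mult_self_eq mult_left_mono power2_eq_square)
  finally have "(a + r)\<^sup>2 \<le> 2 * a\<^sup>2 + 2 * \<bar>r\<bar> * (s1 + s0 + \<bar>a\<bar>)"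
    by simp
  moreover have "\<bar>2 * s0 * r + (a + r)\<^sup>2\<bar> \<le> 2 * s0 * \<bar>r\<bar> + (a + r)\<^sup>2"
    using abs_triangle_ineq[of "2 * s0 * r" "(a + r)\<^sup>2"] s0 by (simp add: abs_mult)
  moreover have "2 * \<bar>r\<bar> * (s1 + 2 * s0 + \<bar>a\<bar>) = 2 * s0 * \<bar>r\<bar> + 2 * \<bar>r\<bar> * (s1 + s0 + \<bar>a\<bar>)"
    by (simp add: algebra_simps)
  ultimately show ?thesis
    by linarith
qed

lemma linearization_pointwise_le:
  fixes f t th p1 p0 L :: real
  assumes p1: "0 \<le> p1" and p0: "0 \<le> p0" and L: "L > 0"
  defines "r \<equiv> sqrt p1 - sqrt p0 * (1 + th * t / 2)"
  shows "\<bar>f * p1 - f * p0 - th * (f * t * p0)\<bar>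
           \<le> 3 * L * (f\<^sup>2 * p1 + 4 * (f\<^sup>2 * p0) + th\<^sup>2 / 4 * (f\<^sup>2 * t\<^sup>2 * p0)) + r\<^sup>2 / L
             + th\<^sup>2 / 2 * (\<bar>f * t\<^sup>2\<bar> * p0)"
proof -
  define a where "a = sqrt p0 * th * t / 2"
  define W where "W = sqrt p1 + 2 * sqrt p0 + \<bar>a\<bar>"
  have r: "r = sqrt p1 - sqrt p0 - a"
    by (simp add: r_def a_def algebra_simps)
  have a_sq: "a\<^sup>2 = th\<^sup>2 / 4 * (t\<^sup>2 * p0)"
    using p0 by (simp add: a_def power_mult_distrib power_divide)
  have W_sq: "W\<^sup>2 \<le> 3 * (p1 + 4 * p0 + a\<^sup>2)"
    using square_sum3_le[of "sqrt p1" "2 * sqrt p0" "\<bar>a\<bar>"] p1 p0 by (simp add: W_def)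
  have "f * p1 - f * p0 - th * (f * t * p0) = f * (p1 - p0 - th * t * p0)"
    by (simp add: algebra_simps)
  also have "\<dots> = f * (2 * sqrt p0 * r + (a + r)\<^sup>2)"
    using sqrt_density_expansion[OF p1 p0, of th t] by (simp add: r_def a_def)
  finally have "\<bar>f * p1 - f * p0 - th * (f * t * p0)\<bar> = \<bar>f\<bar> * \<bar>2 * sqrt p0 * r + (a + r)\<^sup>2\<bar>"
    by (simp add: abs_mult)
  also have "\<dots> \<le> \<bar>f\<bar> * (2 * \<bar>r\<bar> * W + 2 * a\<^sup>2)"
    using abs_expansion_remainder_le[of "sqrt p1" "sqrt p0" a] p1 p0
    by (intro mult_left_mono) (simp_all add: r W_def)
  also have "\<dots> = 2 * (\<bar>f\<bar> * W) * \<bar>r\<bar> + th\<^sup>2 / 2 * (\<bar>f * t\<^sup>2\<bar> * p0)"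
    by (simp add: a_sq abs_mult algebra_simps)
  also have "\<dots> \<le> L * (f\<^sup>2 * W\<^sup>2) + r\<^sup>2 / L + th\<^sup>2 / 2 * (\<bar>f * t\<^sup>2\<bar> * p0)"
    using two_mult_le_scaled_squares[OF L, of "\<bar>f\<bar> * W" "\<bar>r\<bar>"] by (simp add: power_mult_distrib)
  also have "L * (f\<^sup>2 * W\<^sup>2) \<le> 3 * L * (f\<^sup>2 * p1 + 4 * (f\<^sup>2 * p0) + th\<^sup>2 / 4 * (f\<^sup>2 * t\<^sup>2 * p0))"
  proof -
    have "f\<^sup>2 * W\<^sup>2 \<le> 3 * (f\<^sup>2 * p1 + 4 * (f\<^sup>2 * p0) + th\<^sup>2 / 4 * (f\<^sup>2 * t\<^sup>2 * p0))"
      using mult_left_mono[OF W_sq, of "f\<^sup>2"] by (simp add: a_sq algebra_simps)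
    then show ?thesis
      using mult_left_mono[of _ _ L] L by (simp add: mult.assoc)
  qed
  finally show ?thesis
    by simp
qed

lemma integrable_mult_mult_density:
  fixes f g q :: "'a \<Rightarrow> real"
  assumes meas: "f \<in> borel_measurable M" "g \<in> borel_measurable M" "q \<in> borel_measurable M"
    and q_nonneg: "\<And>x. x \<in> space M \<Longrightarrow> 0 \<le> q x"
    and int: "integrable M (\<lambda>x. (f x)\<^sup>2 * q x)" "integrable M (\<lambda>x. (g x)\<^sup>2 * q x)"
  shows "integrable M (\<lambda>x. f x * g x * q x)"
proof (rule Bochner_Integration.integrable_bound[OF Bochner_Integration.integrable_add[OF int]])
  show "(\<lambda>x. f x * g x * q x) \<in> borel_measurable M"
    using meas by measurable
  show "AE x in M. norm (f x * g x * q x) \<le> norm ((f x)\<^sup>2 * q x + (g x)\<^sup>2 * q x)"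
  proof (rule AE_I2)
    fix x assume x: "x \<in> space M"
    have "2 * \<bar>f x * g x\<bar> \<le> (f x)\<^sup>2 + (g x)\<^sup>2"
      using zero_le_square[of "\<bar>f x\<bar> - \<bar>g x\<bar>"] by (simp add: abs_mult power2_eq_square algebra_simps)
    then have "\<bar>f x * g x\<bar> * q x \<le> ((f x)\<^sup>2 + (g x)\<^sup>2) * q x"
      using q_nonneg[OF x] abs_ge_zero[of "f x * g x"] by (intro mult_right_mono) linarith+
    then show "norm (f x * g x * q x) \<le> norm ((f x)\<^sup>2 * q x + (g x)\<^sup>2 * q x)"
      using q_nonneg[OF x] by (simp add: abs_mult algebra_simps)
  qed
qed

lemma expect_linearization_error_le:
  fixes L :: real
  assumes dens: "density_family M \<Omega> p" and \<theta>: "\<theta> \<in> \<Omega>" and zero: "0 \<in> \<Omega>" and L: "L > 0"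
    and f_meas: "f \<in> borel_measurable M" and T_meas: "T \<in> borel_measurable M"
    and int_f2: "integrable M (\<lambda>x. (f x)\<^sup>2 * p \<theta> x)"
    and int_f2_0: "integrable M (\<lambda>x. (f x)\<^sup>2 * p 0 x)"
    and int_T2: "integrable M (\<lambda>x. (T x)\<^sup>2 * p 0 x)"
    and int_f2T2: "integrable M (\<lambda>x. (f x)\<^sup>2 * (T x)\<^sup>2 * p 0 x)"
    and int_fT2: "integrable M (\<lambda>x. \<bar>f x * (T x)\<^sup>2\<bar> * p 0 x)"
    and int_rem: "integrable M (\<lambda>x. (dqm_rem p T \<theta> x)\<^sup>2)"
  shows "\<bar>expect M p \<theta> f - (expect M p 0 f + \<theta> * expect M p 0 (\<lambda>x. f x * T x))\<bar>
           \<le> 3 * L * (expect M p \<theta> (\<lambda>x. (f x)\<^sup>2) + 4 * expect M p 0 (\<lambda>x. (f x)\<^sup>2)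
                        + \<theta>\<^sup>2 / 4 * expect M p 0 (\<lambda>x. (f x)\<^sup>2 * (T x)\<^sup>2))
             + (\<integral>x. (dqm_rem p T \<theta> x)\<^sup>2 \<partial>M) / L + \<theta>\<^sup>2 / 2 * expect M p 0 (\<lambda>x. \<bar>f x * (T x)\<^sup>2\<bar>)"
    (is "_ \<le> ?rhs")
proof -
  have p_meas: "p t \<in> borel_measurable M" and p_nonneg: "\<And>x. x \<in> space M \<Longrightarrow> 0 \<le> p t x"
    and p_int: "integrable M (p t)" if "t \<in> \<Omega>" for t
    using dens that unfolding density_family_def by auto
  have int_fp: "integrable M (\<lambda>x. f x * p t x)" if "t \<in> \<Omega>" "integrable M (\<lambda>x. (f x)\<^sup>2 * p t x)" for t
    using integrable_mult_mult_density[of f M "\<lambda>_. 1" "p t"] that f_meas p_meas p_nonneg p_int by simp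
  have int_fTp: "integrable M (\<lambda>x. f x * T x * p 0 x)"
    by (rule integrable_mult_mult_density) (use f_meas T_meas p_meas p_nonneg int_f2_0 int_T2 zero in auto)
  define R where "R x = 3 * L * ((f x)\<^sup>2 * p \<theta> x + 4 * ((f x)\<^sup>2 * p 0 x) + \<theta>\<^sup>2 / 4 * ((f x)\<^sup>2 * (T x)\<^sup>2 * p 0 x))
      + (dqm_rem p T \<theta> x)\<^sup>2 / L + \<theta>\<^sup>2 / 2 * (\<bar>f x * (T x)\<^sup>2\<bar> * p 0 x)" for x
  have "\<bar>expect M p \<theta> f - (expect M p 0 f + \<theta> * expect M p 0 (\<lambda>x. f x * T x))\<bar>
      = \<bar>\<integral>x. f x * p \<theta> x - f x * p 0 x - \<theta> * (f x * T x * p 0 x) \<partial>M\<bar>"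
    unfolding expect_def using int_fp[OF \<theta> int_f2] int_fp[OF zero int_f2_0] int_fTp
    by (simp add: integral_diff integral_mult_right mult.assoc)
  also have "\<dots> \<le> (\<integral>x. \<bar>f x * p \<theta> x - f x * p 0 x - \<theta> * (f x * T x * p 0 x)\<bar> \<partial>M)"
    by (rule integral_abs_bound)
  also have "\<dots> \<le> integral\<^sup>L M R"
  proof (rule integral_mono)
    show "integrable M (\<lambda>x. \<bar>f x * p \<theta> x - f x * p 0 x - \<theta> * (f x * T x * p 0 x)\<bar>)"
      using int_fp[OF \<theta> int_f2] int_fp[OF zero int_f2_0] int_fTp by auto
    show "integrable M R"
      unfolding R_def using int_f2 int_f2_0 int_f2T2 int_fT2 int_rem by auto
    show "\<bar>f x * p \<theta> x - f x * p 0 x - \<theta> * (f x * T x * p 0 x)\<bar> \<le> R x" if "x \<in> space M" for x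
      unfolding R_def dqm_rem_def
      by (rule linearization_pointwise_le[OF p_nonneg[OF \<theta> that] p_nonneg[OF zero that] L])
  qed
  also have "integral\<^sup>L M R = ?rhs"
    unfolding R_def expect_def using int_f2 int_f2_0 int_f2T2 int_fT2 int_rem
    by (simp add: integral_add integral_mult_right integral_divide)
  finally show ?thesis .
qed

lemma expect_linearization_error_le_eps:
  fixes \<epsilon> B :: real
  assumes dens: "density_family M \<Omega> p" and \<theta>: "\<theta> \<in> \<Omega>" and zero: "0 \<in> \<Omega>"
    and \<epsilon>: "\<epsilon> > 0" and B: "B > 0"
    and \<theta>_ne: "\<theta> \<noteq> 0" and \<theta>_small: "\<bar>\<theta>\<bar> \<le> 1" "\<bar>\<theta>\<bar> \<le> 2 * \<epsilon> / (3 * B)"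
    and f_meas: "f \<in> borel_measurable M" and T_meas: "T \<in> borel_measurable M"
    and int_f2: "integrable M (\<lambda>x. (f x)\<^sup>2 * p \<theta> x)"
    and int_f2_0: "integrable M (\<lambda>x. (f x)\<^sup>2 * p 0 x)"
    and int_T2: "integrable M (\<lambda>x. (T x)\<^sup>2 * p 0 x)"
    and int_f2T2: "integrable M (\<lambda>x. (f x)\<^sup>2 * (T x)\<^sup>2 * p 0 x)"
    and int_fT2: "integrable M (\<lambda>x. \<bar>f x * (T x)\<^sup>2\<bar> * p 0 x)"
    and int_rem: "integrable M (\<lambda>x. (dqm_rem p T \<theta> x)\<^sup>2)"
    and moments: "expect M p \<theta> (\<lambda>x. (f x)\<^sup>2) < B" "expect M p 0 (\<lambda>x. (f x)\<^sup>2) < B"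
      "expect M p 0 (\<lambda>x. (f x)\<^sup>2 * (T x)\<^sup>2) < B" "expect M p 0 (\<lambda>x. \<bar>f x * (T x)\<^sup>2\<bar>) < B"
    and rem: "(\<integral>x. (dqm_rem p T \<theta> x)\<^sup>2 \<partial>M) \<le> \<epsilon>\<^sup>2 / (144 * B) * \<theta>\<^sup>2"
  shows "\<bar>expect M p \<theta> f - (expect M p 0 f + \<theta> * expect M p 0 (\<lambda>x. f x * T x))\<bar> \<le> \<epsilon> * \<bar>\<theta>\<bar>"
proof -
  define L where "L = \<epsilon> * \<bar>\<theta>\<bar> / (48 * B)"
  have L: "L > 0"
    using \<epsilon> B \<theta>_ne by (simp add: L_def)
  have "\<bar>expect M p \<theta> f - (expect M p 0 f + \<theta> * expect M p 0 (\<lambda>x. f x * T x))\<bar>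
      \<le> 3 * L * (expect M p \<theta> (\<lambda>x. (f x)\<^sup>2) + 4 * expect M p 0 (\<lambda>x. (f x)\<^sup>2)
                   + \<theta>\<^sup>2 / 4 * expect M p 0 (\<lambda>x. (f x)\<^sup>2 * (T x)\<^sup>2))
        + (\<integral>x. (dqm_rem p T \<theta> x)\<^sup>2 \<partial>M) / L + \<theta>\<^sup>2 / 2 * expect M p 0 (\<lambda>x. \<bar>f x * (T x)\<^sup>2\<bar>)"
    by (rule expect_linearization_error_le[OF dens \<theta> zero L f_meas T_meas
          int_f2 int_f2_0 int_T2 int_f2T2 int_fT2 int_rem])
  also have "\<dots> \<le> 3 * L * (B + 4 * B + \<theta>\<^sup>2 / 4 * B) + \<epsilon>\<^sup>2 / (144 * B) * \<theta>\<^sup>2 / L + \<theta>\<^sup>2 / 2 * B"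
    using moments rem L by (intro add_mono mult_left_mono divide_right_mono) auto
  also have "\<dots> \<le> \<epsilon> * \<bar>\<theta>\<bar> / 3 + \<epsilon> * \<bar>\<theta>\<bar> / 3 + \<epsilon> * \<bar>\<theta>\<bar> / 3"
  proof (intro add_mono)
    have "\<theta>\<^sup>2 \<le> 1"
      using \<theta>_small(1) by (simp add: abs_square_le_1)
    then have "B + 4 * B + \<theta>\<^sup>2 / 4 * B \<le> 16 * B / 3"
      using B by (simp add: algebra_simps)
    from mult_left_mono[OF this, of "3 * L"] L
    show "3 * L * (B + 4 * B + \<theta>\<^sup>2 / 4 * B) \<le> \<epsilon> * \<bar>\<theta>\<bar> / 3"
      using B by (simp add: L_def field_simps)
    show "\<epsilon>\<^sup>2 / (144 * B) * \<theta>\<^sup>2 / L \<le> \<epsilon> * \<bar>\<theta>\<bar> / 3"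
      using B \<epsilon> \<theta>_ne
      by (simp add: L_def field_simps power2_eq_square abs_mult_self_eq[of \<theta>, symmetric] del: abs_mult_self_eq)
    have "\<theta>\<^sup>2 / 2 * B = \<bar>\<theta>\<bar> * (\<bar>\<theta>\<bar> * B / 2)"
      by (simp add: power2_eq_square)
    also have "\<dots> \<le> \<bar>\<theta>\<bar> * (\<epsilon> / 3)"
      using \<theta>_small(2) B by (intro mult_left_mono) (simp_all add: field_simps)
    finally show "\<theta>\<^sup>2 / 2 * B \<le> \<epsilon> * \<bar>\<theta>\<bar> / 3"
      by (simp add: mult.commute)
  qed
  finally show ?thesis
    by simp
qed

theorem lemma3:
  fixes M :: "'a measure" and \<Omega> :: "real set" and p :: "real \<Rightarrow> 'a \<Rightarrow> real"
    and T :: "'a \<Rightarrow> real" and \<F> :: "('a \<Rightarrow> real) set" and B :: real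
  assumes nbhd: "0 \<in> interior \<Omega>"
    and dens: "density_family M \<Omega> p"
    and dqm: "dqm_at0 M \<Omega> p T"
    and T_meas: "T \<in> borel_measurable M"
    and T_L2: "integrable M (\<lambda>x. (T x)\<^sup>2 * p 0 x)"
    and B_pos: "B > 0"
    and F_meas: "\<And>f. f \<in> \<F> \<Longrightarrow> f \<in> borel_measurable M"
    and F_nbhd: "\<exists>\<delta>>0. \<forall>f\<in>\<F>. \<forall>\<theta>\<in>\<Omega>. \<bar>\<theta>\<bar> < \<delta> \<longrightarrow>
                   integrable M (\<lambda>x. (f x)\<^sup>2 * p \<theta> x) \<and> expect M p \<theta> (\<lambda>x. (f x)\<^sup>2) < B"
    and F_1: "\<And>f. f \<in> \<F> \<Longrightarrow> integrable M (\<lambda>x. \<bar>(f x)\<^sup>2 * T x\<bar> * p 0 x)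
                 \<and> expect M p 0 (\<lambda>x. \<bar>(f x)\<^sup>2 * T x\<bar>) < B"
    and F_2: "\<And>f. f \<in> \<F> \<Longrightarrow> integrable M (\<lambda>x. \<bar>f x * (T x)\<^sup>2\<bar> * p 0 x)
                 \<and> expect M p 0 (\<lambda>x. \<bar>f x * (T x)\<^sup>2\<bar>) < B"
    and F_3: "\<And>f. f \<in> \<F> \<Longrightarrow> integrable M (\<lambda>x. (f x)\<^sup>2 * (T x)\<^sup>2 * p 0 x)
                 \<and> expect M p 0 (\<lambda>x. (f x)\<^sup>2 * (T x)\<^sup>2) < B"
  shows "\<forall>\<epsilon>>0. \<forall>\<^sub>F \<theta> in at 0. \<forall>f\<in>\<F>.
           \<bar>expect M p \<theta> f - (expect M p 0 f + \<theta> * expect M p 0 (\<lambda>x. f x * T x))\<bar> \<le> \<epsilon> * \<bar>\<theta>\<bar>"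
proof (intro allI impI)
  fix \<epsilon> :: real
  assume \<epsilon>: "\<epsilon> > 0"
  obtain \<delta> where \<delta>: "\<delta> > 0" and moment_nbhd: "\<And>f \<theta>. f \<in> \<F> \<Longrightarrow> \<theta> \<in> \<Omega> \<Longrightarrow> \<bar>\<theta>\<bar> < \<delta> \<Longrightarrow>
      integrable M (\<lambda>x. (f x)\<^sup>2 * p \<theta> x) \<and> expect M p \<theta> (\<lambda>x. (f x)\<^sup>2) < B"
    using F_nbhd by blast
  have zero: "0 \<in> \<Omega>"
    using nbhd interior_subset by blast
  define \<rho> where "\<rho> = min \<delta> (min 1 (2 * \<epsilon> / (3 * B)))"
  have "\<forall>\<^sub>F \<theta> in at 0. \<theta> \<in> interior \<Omega>"
    by (rule eventually_at_in_open'[OF open_interior nbhd])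
  moreover have "\<forall>\<^sub>F \<theta> in at 0. \<theta> \<in> ball 0 \<rho> - {0}"
    using \<delta> \<epsilon> B_pos by (intro eventually_at_in_open) (auto simp: \<rho>_def)
  moreover have "\<forall>\<^sub>F \<theta> in at 0. norm (\<integral>x. (dqm_rem p T \<theta> x)\<^sup>2 \<partial>M) \<le> \<epsilon>\<^sup>2 / (144 * B) * norm (\<theta>\<^sup>2)"
    using dqm \<epsilon> B_pos unfolding dqm_at0_def by (intro landau_o.smallD) auto
  ultimately show "\<forall>\<^sub>F \<theta> in at 0. \<forall>f\<in>\<F>.
      \<bar>expect M p \<theta> f - (expect M p 0 f + \<theta> * expect M p 0 (\<lambda>x. f x * T x))\<bar> \<le> \<epsilon> * \<bar>\<theta>\<bar>"
  proof eventually_elim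
    case (elim \<theta>)
    then have \<theta>: "\<theta> \<in> \<Omega>" "\<theta> \<noteq> 0" "\<bar>\<theta>\<bar> < \<delta>" "\<bar>\<theta>\<bar> \<le> 1" "\<bar>\<theta>\<bar> \<le> 2 * \<epsilon> / (3 * B)"
      using interior_subset by (auto simp: \<rho>_def)
    have rem: "(\<integral>x. (dqm_rem p T \<theta> x)\<^sup>2 \<partial>M) \<le> \<epsilon>\<^sup>2 / (144 * B) * \<theta>\<^sup>2"
      using elim by simp
    show ?case
    proof
      fix f assume f: "f \<in> \<F>"
      from moment_nbhd[OF f \<theta>(1,3)] moment_nbhd[OF f zero] F_2[OF f] F_3[OF f]
      show "\<bar>expect M p \<theta> f - (expect M p 0 f + \<theta> * expect M p 0 (\<lambda>x. f x * T x))\<bar> \<le> \<epsilon> * \<bar>\<theta>\<bar>"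
        using \<delta> dqm \<theta>(1) rem
        by (intro expect_linearization_error_le_eps[OF dens \<theta>(1) zero \<epsilon> B_pos \<theta>(2,4,5) F_meas[OF f] T_meas
              _ _ T_L2]) (auto simp: dqm_at0_def)
    qed
  qed
qed

end
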